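(* For every cubic graph $G$, $\nu_3(G) \geq \frac{7}{6}\cdot |V(G)|$.
   Context: Graphs are finite, without loops, possibly with multiple edges; a graph is cubic if every vertex has degree $3$. For $k\geq 1$, $\nu_k(G)$ is the maximum number of edges of a $k$-edge-colorable subgraph of $G$. *)

theory Defs
  imports Complex_Main
begin

text \<open>Parallel edges are distinct elements of E with the same endpoints.\<close>
definition multigraph :: "'v set \<Rightarrow> 'e set \<Rightarrow> ('e \<Rightarrow> 'v set) \<Rightarrow> bool" where
  "multigraph V E ends \<longleftrightarrow> finite V \<and> finite E \<and>
     (\<forall>e\<in>E. ends e \<subseteq> V \<and> card (ends e) = 2)"

definition degree :: "'e set \<Rightarrow> ('e \<Rightarrow> 'v set) \<Rightarrow> 'v \<Rightarrow> nat" where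
  "degree E ends v = card {e\<in>E. v \<in> ends e}"

definition cubic :: "'v set \<Rightarrow> 'e set \<Rightarrow> ('e \<Rightarrow> 'v set) \<Rightarrow> bool" where
  "cubic V E ends \<longleftrightarrow> multigraph V E ends \<and> (\<forall>v\<in>V. degree E ends v = 3)"

definition proper_edge_coloring :: "nat \<Rightarrow> 'e set \<Rightarrow> ('e \<Rightarrow> 'v set) \<Rightarrow> ('e \<Rightarrow> nat) \<Rightarrow> bool" where
  "proper_edge_coloring k F ends c \<longleftrightarrow>
     (\<forall>e\<in>F. c e < k) \<and>
     (\<forall>e\<in>F. \<forall>f\<in>F. e \<noteq> f \<and> ends e \<inter> ends f \<noteq> {} \<longrightarrow> c e \<noteq> c f)"

definition k_edge_colorable :: "nat \<Rightarrow> 'e set \<Rightarrow> ('e \<Rightarrow> 'v set) \<Rightarrow> bool" where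
  "k_edge_colorable k F ends \<longleftrightarrow> (\<exists>c. proper_edge_coloring k F ends c)"

definition nu :: "nat \<Rightarrow> 'e set \<Rightarrow> ('e \<Rightarrow> 'v set) \<Rightarrow> nat" where
  "nu k E ends = Max {card F | F. F \<subseteq> E \<and> k_edge_colorable k F ends}"

end

theory Submission
  imports Defs "HOL-Combinatorics.Transposition"
begin

text \<open>
  Let \<open>F\<close> be a maximum 3-edge-colourable subgraph of the cubic graph, properly coloured by \<open>c\<close>,
  and call the edges of \<open>E - F\<close> uncovered. Kempe swaps show that the uncovered edges form a
  matching, so \<open>|V| = 2 |E - F| + |S|\<close> for the set \<open>S\<close> of vertices on no uncovered edge.
  If the uncovered edge \<open>uv\<close> misses colour \<open>a\<close> at \<open>u\<close> and \<open>b\<close> at \<open>v\<close>, the \<open>{a, b}\<close>-Kempe chain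
  of \<open>u\<close> is an alternating path from \<open>u\<close> to \<open>v\<close> with an even number of edges, and its interior
  lies in \<open>S\<close>: otherwise shifting the colouring along the path would produce two adjacent
  uncovered edges. A vertex lies in at most three interiors (one for each pair of colours) and
  a one-vertex interior is shared with no other edge, so discharging gives \<open>|E - F| \<le> |S|\<close>.
  Hence \<open>|V| \<ge> 3 |E - F|\<close>, and with \<open>3 |V| = 2 |E| = 2 |F| + 2 |E - F|\<close> this yields
  \<open>|F| \<ge> 7 |V| / 6\<close>.
\<close>

lemma sum_inverse_multiplicity_le:
  fixes A :: "'i \<Rightarrow> 'a set"
  assumes "finite I" "finite S" "\<And>i. i \<in> I \<Longrightarrow> A i \<subseteq> S"
  shows "(\<Sum>i\<in>I. \<Sum>x\<in>A i. 1 / real (card {j\<in>I. x \<in> A j})) \<le> real (card S)"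
proof -
  have "(\<Sum>i\<in>I. \<Sum>x\<in>A i. 1 / real (card {j\<in>I. x \<in> A j}))
      = (\<Sum>i\<in>I. \<Sum>x\<in>S. if x \<in> A i then 1 / real (card {j\<in>I. x \<in> A j}) else 0)"
  proof (rule sum.cong[OF refl])
    fix i assume "i \<in> I"
    then have "S \<inter> A i = A i"
      using assms(3) by blast
    then show "(\<Sum>x\<in>A i. 1 / real (card {j\<in>I. x \<in> A j}))
        = (\<Sum>x\<in>S. if x \<in> A i then 1 / real (card {j\<in>I. x \<in> A j}) else 0)"
      using sum.inter_restrict[OF assms(2), of "\<lambda>x. 1 / real (card {j\<in>I. x \<in> A j})" "A i"]
      by simp
  qed
  also have "\<dots> = (\<Sum>x\<in>S. \<Sum>i\<in>I. if x \<in> A i then 1 / real (card {j\<in>I. x \<in> A j}) else 0)"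
    by (rule sum.swap)
  also have "\<dots> = (\<Sum>x\<in>S. real (card {j\<in>I. x \<in> A j}) * (1 / real (card {j\<in>I. x \<in> A j})))"
    using assms(1) by (intro sum.cong refl) (simp add: sum.inter_filter[symmetric])
  also have "\<dots> \<le> (\<Sum>x\<in>S. 1)"
    by (intro sum_mono) simp
  finally show ?thesis
    by simp
qed

lemma two_subsets_of_three_meet:
  fixes a b a' b' :: nat
  assumes "a < 3" "b < 3" "a' < 3" "b' < 3" "a \<noteq> b" "a' \<noteq> b'"
  shows "a \<in> {a', b'} \<or> b \<in> {a', b'}"
  using assms by simp presburger

locale loopless_multigraph =
  fixes V :: "'v set" and E :: "'e set" and ends :: "'e \<Rightarrow> 'v set"
  assumes multigraph: "multigraph V E ends"
begin

lemma finite_V: "finite V"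
  and finite_E: "finite E"
  and ends_subset: "e \<in> E \<Longrightarrow> ends e \<subseteq> V"
  and card_ends: "e \<in> E \<Longrightarrow> card (ends e) = 2"
  using multigraph by (auto simp: multigraph_def)

lemma finite_ends: "e \<in> E \<Longrightarrow> finite (ends e)"
  using card_ends card.infinite by fastforce

lemma obtain_other_end:
  assumes "e \<in> E" "x \<in> ends e"
  obtains y where "y \<noteq> x" "ends e = {x, y}"
proof -
  obtain p q where "ends e = {p, q}" "p \<noteq> q"
    using card_ends[OF assms(1)] by (auto simp: card_2_iff)
  with assms(2) that show thesis
    by (metis insert_commute insertE singletonD)
qed

lemma degree_diff:
  assumes "F \<subseteq> E"
  shows "degree E ends x = degree F ends x + degree (E - F) ends x"
proof -
  have "degree E ends x = card ({e\<in>F. x \<in> ends e} \<union> {e\<in>E - F. x \<in> ends e})"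
    unfolding degree_def using assms by (intro arg_cong[where f = card]) auto
  also have "\<dots> = degree F ends x + degree (E - F) ends x"
    unfolding degree_def using finite_E assms by (intro card_Un_disjoint) (auto intro: finite_subset)
  finally show ?thesis .
qed

lemma handshake: "(\<Sum>x\<in>V. degree E ends x) = 2 * card E"
proof -
  have "(\<Sum>x\<in>V. degree E ends x) = (\<Sum>x\<in>V. \<Sum>f\<in>E. if x \<in> ends f then 1 else 0)"
  proof (rule sum.cong[OF refl])
    fix x
    show "degree E ends x = (\<Sum>f\<in>E. if x \<in> ends f then 1 else 0)"
      unfolding degree_def using sum.inter_filter[OF finite_E, of "\<lambda>_. 1::nat"] by simp
  qed
  also have "\<dots> = (\<Sum>f\<in>E. \<Sum>x\<in>V. if x \<in> ends f then 1 else 0)"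
    by (rule sum.swap)
  also have "\<dots> = (\<Sum>f\<in>E. card (ends f))"
  proof (intro sum.cong refl)
    fix f assume "f \<in> E"
    then have "{x\<in>V. x \<in> ends f} = ends f"
      using ends_subset by auto
    then show "(\<Sum>x\<in>V. if x \<in> ends f then 1 else 0) = card (ends f)"
      using sum.inter_filter[OF finite_V, of "\<lambda>_. 1::nat" "\<lambda>x. x \<in> ends f"] by simp
  qed
  finally show ?thesis
    using card_ends by simp
qed

definition colour_at :: "'e set \<Rightarrow> ('e \<Rightarrow> nat) \<Rightarrow> nat \<Rightarrow> 'v \<Rightarrow> bool" where
  "colour_at F c k x \<longleftrightarrow> (\<exists>f\<in>F. c f = k \<and> x \<in> ends f)"

lemma colour_atI: "f \<in> F \<Longrightarrow> c f = k \<Longrightarrow> x \<in> ends f \<Longrightarrow> colour_at F c k x"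
  unfolding colour_at_def by blast

lemma colour_at_mono: "colour_at F' c k x \<Longrightarrow> F' \<subseteq> F \<Longrightarrow> colour_at F c k x"
  unfolding colour_at_def by blast

lemma proper_edge_coloring_unique:
  assumes "proper_edge_coloring k F ends c" "f \<in> F" "g \<in> F" "c f = c g" "x \<in> ends f" "x \<in> ends g"
  shows "f = g"
  using assms unfolding proper_edge_coloring_def by blast

lemma card_colours_at:
  assumes "proper_edge_coloring k F ends c" "finite F"
  shows "card {j. colour_at F c j x} = degree F ends x"
proof -
  have "{j. colour_at F c j x} = c ` {f\<in>F. x \<in> ends f}"
    unfolding colour_at_def by blast
  moreover have "inj_on c {f\<in>F. x \<in> ends f}"
    using proper_edge_coloring_unique[OF assms(1)] by (auto intro: inj_onI)
  ultimately show ?thesis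
    unfolding degree_def by (simp add: card_image)
qed

lemma card_le_degree_if_colours_at:
  assumes "proper_edge_coloring k F ends c" "finite F" "\<And>j. j \<in> K \<Longrightarrow> colour_at F c j x"
  shows "card K \<le> degree F ends x"
proof -
  have "finite {j. colour_at F c j x}"
    using assms(2) unfolding colour_at_def by (auto intro: finite_subset[of _ "c ` F"])
  then have "card K \<le> card {j. colour_at F c j x}"
    using assms(3) by (intro card_mono) auto
  then show ?thesis
    using card_colours_at[OF assms(1,2)] by simp
qed

lemma missing_colour_exists:
  assumes "proper_edge_coloring k F ends c" "finite F" "degree F ends x < card K"
  obtains j where "j \<in> K" "\<not> colour_at F c j x"
  using card_le_degree_if_colours_at[OF assms(1,2), of K x] assms(3) by force

lemma two_missing_colours:
  assumes proper: "proper_edge_coloring k F ends c" and "finite F" "degree F ends x + 2 \<le> k"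
  obtains a b where "a < k" "b < k" "a \<noteq> b" "\<not> colour_at F c a x" "\<not> colour_at F c b x"
proof -
  obtain a where a: "a \<in> {..<k}" "\<not> colour_at F c a x"
    using missing_colour_exists[OF proper assms(2), of x "{..<k}"] assms(3) by auto
  moreover have "degree F ends x < card ({..<k} - {a})"
    using assms(3) a(1) by simp
  then obtain b where "b \<in> {..<k} - {a}" "\<not> colour_at F c b x"
    by (rule missing_colour_exists[OF proper assms(2)])
  ultimately show thesis
    using that by blast
qed

lemma colour_at_less:
  "proper_edge_coloring k F ends c \<Longrightarrow> colour_at F c j x \<Longrightarrow> j < k"
  unfolding proper_edge_coloring_def colour_at_def by blast

lemma proper_edge_coloring_subset:
  "proper_edge_coloring k F ends c \<Longrightarrow> F' \<subseteq> F \<Longrightarrow> proper_edge_coloring k F' ends c"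
  unfolding proper_edge_coloring_def by blast

lemma proper_edge_coloring_insert:
  assumes "proper_edge_coloring k F ends c" "j < k" "\<And>x. x \<in> ends e \<Longrightarrow> \<not> colour_at F c j x"
  shows "proper_edge_coloring k (insert e F) ends (c(e := j))"
  using assms unfolding proper_edge_coloring_def colour_at_def by (simp, blast)

definition kempe_adj :: "'e set \<Rightarrow> ('e \<Rightarrow> nat) \<Rightarrow> nat set \<Rightarrow> ('v \<times> 'v) set" where
  "kempe_adj F c A = {(x, y). \<exists>f\<in>F. c f \<in> A \<and> ends f = {x, y}}"

definition kempe_chain :: "'e set \<Rightarrow> ('e \<Rightarrow> nat) \<Rightarrow> nat set \<Rightarrow> 'v \<Rightarrow> 'v set" where
  "kempe_chain F c A x = {y. (x, y) \<in> (kempe_adj F c A)\<^sup>*}"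

lemma kempe_adjI: "f \<in> F \<Longrightarrow> c f \<in> A \<Longrightarrow> ends f = {x, y} \<Longrightarrow> (x, y) \<in> kempe_adj F c A"
  unfolding kempe_adj_def by blast

lemma sym_kempe_adj: "sym (kempe_adj F c A)"
  unfolding kempe_adj_def sym_def by (auto simp: insert_commute)

lemma kempe_chain_refl: "x \<in> kempe_chain F c A x"
  by (simp add: kempe_chain_def)

lemma kempe_chain_closed: "kempe_adj F c A `` kempe_chain F c A x \<subseteq> kempe_chain F c A x"
  unfolding kempe_chain_def by (auto intro: rtrancl_into_rtrancl)

lemma kempe_chain_sym: "y \<in> kempe_chain F c A x \<Longrightarrow> x \<in> kempe_chain F c A y"
  using sym_rtrancl[OF sym_kempe_adj] unfolding kempe_chain_def sym_def by blast

lemma kempe_chain_trans: "y \<in> kempe_chain F c A x \<Longrightarrow> z \<in> kempe_chain F c A y \<Longrightarrow> z \<in> kempe_chain F c A x"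
  unfolding kempe_chain_def by auto

lemma kempe_chain_subset:
  assumes "x \<in> S" "kempe_adj F c A `` S \<subseteq> S"
  shows "kempe_chain F c A x \<subseteq> S"
proof
  fix y assume "y \<in> kempe_chain F c A x"
  then have "(x, y) \<in> (kempe_adj F c A)\<^sup>*"
    by (simp add: kempe_chain_def)
  then show "y \<in> S"
    by induction (use assms in auto)
qed

lemma ends_subset_if_kempe_closed:
  assumes "F \<subseteq> E" "f \<in> F" "c f \<in> A" "z \<in> ends f" "z \<in> S" "kempe_adj F c A `` S \<subseteq> S"
  shows "ends f \<subseteq> S"
proof -
  obtain y where y: "ends f = {z, y}"
    using obtain_other_end assms(1,2,4) by blast
  then have "(z, y) \<in> kempe_adj F c A"
    using kempe_adjI assms(2,3) by blast
  then have "y \<in> S"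
    using assms(5,6) by blast
  then show ?thesis
    using y assms(5) by simp
qed

definition kempe_swap :: "nat \<Rightarrow> nat \<Rightarrow> 'v set \<Rightarrow> ('e \<Rightarrow> nat) \<Rightarrow> 'e \<Rightarrow> nat" where
  "kempe_swap a b S c f = (if c f \<in> {a, b} \<and> ends f \<subseteq> S then transpose a b (c f) else c f)"

lemma kempe_swap_commute: "kempe_swap a b = kempe_swap b a"
  unfolding kempe_swap_def by (metis transpose_commute insert_commute)

lemma proper_kempe_swap:
  assumes proper: "proper_edge_coloring k F ends c" and "F \<subseteq> E" "a < k" "b < k"
    and closed: "kempe_adj F c {a, b} `` S \<subseteq> S"
  shows "proper_edge_coloring k F ends (kempe_swap a b S c)"
  unfolding proper_edge_coloring_def
proof (intro conjI ballI impI)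
  fix f assume "f \<in> F"
  then show "kempe_swap a b S c f < k"
    using proper assms(3,4) by (auto simp: proper_edge_coloring_def kempe_swap_def transpose_def)
next
  fix f g assume f: "f \<in> F" and g: "g \<in> F" and fg: "f \<noteq> g \<and> ends f \<inter> ends g \<noteq> {}"
  then obtain z where z: "z \<in> ends f" "z \<in> ends g"
    by blast
  have "c f \<noteq> c g"
    using proper_edge_coloring_unique[OF proper f g _ z] fg by blast
  moreover have "c f \<in> {a, b} \<and> ends f \<subseteq> S \<and> c g \<in> {a, b} \<longrightarrow> ends g \<subseteq> S"
    using ends_subset_if_kempe_closed[OF assms(2) g _ z(2) _ closed] z(1) by blast
  moreover have "c g \<in> {a, b} \<and> ends g \<subseteq> S \<and> c f \<in> {a, b} \<longrightarrow> ends f \<subseteq> S"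
    using ends_subset_if_kempe_closed[OF assms(2) f _ z(1) _ closed] z(2) by blast
  ultimately show "kempe_swap a b S c f \<noteq> kempe_swap a b S c g"
    unfolding kempe_swap_def by (auto simp: transpose_eq_iff)
qed

lemma colour_at_kempe_swap_outside:
  assumes "x \<notin> S"
  shows "colour_at F (kempe_swap a b S c) j x = colour_at F c j x"
proof -
  have "kempe_swap a b S c f = c f" if "x \<in> ends f" for f
    using assms that by (auto simp: kempe_swap_def)
  then show ?thesis
    unfolding colour_at_def by metis
qed

lemma colour_at_kempe_swap_inside:
  assumes "F \<subseteq> E" "x \<in> S" "kempe_adj F c {a, b} `` S \<subseteq> S"
  shows "colour_at F (kempe_swap a b S c) a x = colour_at F c b x"
proof -
  have "kempe_swap a b S c f = transpose a b (c f)" if "f \<in> F" "x \<in> ends f" for f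
    using ends_subset_if_kempe_closed[OF assms(1) that(1) _ that(2) assms(2,3)]
    by (auto simp: kempe_swap_def transpose_def)
  then show ?thesis
    unfolding colour_at_def by (metis transpose_apply_first transpose_eq_iff)
qed

definition max_colouring :: "nat \<Rightarrow> 'e set \<Rightarrow> ('e \<Rightarrow> nat) \<Rightarrow> bool" where
  "max_colouring k F c \<longleftrightarrow> F \<subseteq> E \<and> proper_edge_coloring k F ends c \<and>
     (\<forall>F' c'. F' \<subseteq> E \<and> proper_edge_coloring k F' ends c' \<longrightarrow> card F' \<le> card F)"

lemma max_colouring_exists:
  obtains F c where "max_colouring k F c" "nu k E ends = card F"
proof -
  let ?S = "{card F | F. F \<subseteq> E \<and> k_edge_colorable k F ends}"
  have "finite ?S"
    using finite_E by (auto intro: finite_subset[of _ "card ` Pow E"])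
  moreover have "card {} \<in> ?S"
    by (auto simp: k_edge_colorable_def proper_edge_coloring_def intro!: exI[of _ "{}"])
  ultimately have "Max ?S \<in> ?S"
    by (intro Max_in) auto
  then obtain F c where F: "F \<subseteq> E" "proper_edge_coloring k F ends c" "card F = Max ?S"
    unfolding k_edge_colorable_def by auto
  have "card F' \<le> card F" if "F' \<subseteq> E" "proper_edge_coloring k F' ends c'" for F' c'
    using that \<open>finite ?S\<close> F(3) unfolding k_edge_colorable_def by (auto intro: Max_ge)
  then have "max_colouring k F c"
    using F(1,2) unfolding max_colouring_def by blast
  moreover have "nu k E ends = card F"
    unfolding nu_def using F(3) by simp
  ultimately show thesis
    by (rule that)
qed

lemma max_colouringD:
  assumes "max_colouring k F c"
  shows "F \<subseteq> E" "proper_edge_coloring k F ends c" "finite F"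
  using assms finite_E unfolding max_colouring_def by (auto intro: finite_subset)

lemma max_colouring_same_card:
  assumes "max_colouring k F c" "F' \<subseteq> E" "proper_edge_coloring k F' ends c'" "card F' = card F"
  shows "max_colouring k F' c'"
  using assms unfolding max_colouring_def by auto

lemma max_colouring_colour_at_end:
  assumes max: "max_colouring k F c" and "e \<in> E - F" "j < k"
  shows "\<exists>x\<in>ends e. colour_at F c j x"
proof (rule ccontr)
  assume "\<not> (\<exists>x\<in>ends e. colour_at F c j x)"
  then have "proper_edge_coloring k (insert e F) ends (c(e := j))"
    using proper_edge_coloring_insert max_colouringD(2)[OF max] assms(3) by blast
  then have "card (insert e F) \<le> card F"
    using max assms(2) unfolding max_colouring_def by blast
  then show False
    using max_colouringD(3)[OF max] assms(2) by simp
qed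

lemma max_colouring_kempe_chain:
  assumes max: "max_colouring k F c" and e: "e \<in> E - F" "ends e = {u, v}"
    and "a < k" "b < k" "\<not> colour_at F c a u" "\<not> colour_at F c b v"
  shows "v \<in> kempe_chain F c {a, b} u"
proof (rule ccontr)
  assume v: "v \<notin> kempe_chain F c {a, b} u"
  let ?S = "kempe_chain F c {a, b} u"
  let ?c = "kempe_swap b a ?S c"
  have closed: "kempe_adj F c {a, b} `` ?S \<subseteq> ?S"
    by (rule kempe_chain_closed)
  have "proper_edge_coloring k F ends ?c"
    unfolding kempe_swap_commute[of b]
    using proper_kempe_swap max_colouringD[OF max] assms(4,5) closed by blast
  then have "max_colouring k F ?c"
    using max_colouring_same_card max max_colouringD(1) by blast
  moreover have "\<not> colour_at F ?c b u"
    using colour_at_kempe_swap_inside[where a = b and b = a] closed max_colouringD(1)[OF max]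
      kempe_chain_refl assms(6) by (metis insert_commute)
  moreover have "\<not> colour_at F ?c b v"
    using colour_at_kempe_swap_outside[OF v] assms(7) by simp
  ultimately show False
    using max_colouring_colour_at_end[OF _ e(1) assms(5)] e(2) by auto
qed

definition alt_colour :: "nat \<Rightarrow> nat \<Rightarrow> nat \<Rightarrow> nat" where
  "alt_colour a b i = (if odd i then b else a)"

definition alternating_path :: "'e set \<Rightarrow> ('e \<Rightarrow> nat) \<Rightarrow> nat \<Rightarrow> nat \<Rightarrow> 'v list \<Rightarrow> bool" where
  "alternating_path F c a b xs \<longleftrightarrow> distinct xs \<and>
     (\<forall>i. 0 < i \<and> i < length xs \<longrightarrow>
        (\<exists>f\<in>F. c f = alt_colour a b i \<and> ends f = {xs ! (i - 1), xs ! i}))"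

lemma alternating_pathD:
  assumes "alternating_path F c a b xs" "0 < i" "i < length xs"
  obtains f where "f \<in> F" "c f = alt_colour a b i" "ends f = {xs ! (i - 1), xs ! i}"
  using assms unfolding alternating_path_def by blast

lemma alternating_path_distinct: "alternating_path F c a b xs \<Longrightarrow> distinct xs"
  by (simp add: alternating_path_def)

lemma alternating_path_edge_at:
  assumes proper: "proper_edge_coloring k F ends c" and path: "alternating_path F c a b xs"
    and "\<not> colour_at F c a (xs ! 0)" "g \<in> F" "c g \<in> {a, b}" "Suc j < length xs" "xs ! j \<in> ends g"
  obtains i where "i = j \<or> i = Suc j" "0 < i" "c g = alt_colour a b i"
    "ends g = {xs ! (i - 1), xs ! i}"
proof (cases "c g = alt_colour a b (Suc j)")
  case True
  obtain p where p: "p \<in> F" "c p = alt_colour a b (Suc j)" "ends p = {xs ! j, xs ! Suc j}"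
    using alternating_pathD[OF path, of "Suc j"] assms(6) by auto
  have "g = p"
    using proper_edge_coloring_unique[OF proper assms(4) p(1)] True p assms(7) by auto
  then show thesis
    using that[of "Suc j"] p True by auto
next
  case False
  then have colour: "c g = alt_colour a b j"
    using assms(5) by (auto simp: alt_colour_def)
  show thesis
  proof (cases j)
    case 0
    then have "colour_at F c a (xs ! 0)"
      using colour assms(4,7) by (auto simp: alt_colour_def intro: colour_atI)
    with assms(3) show thesis
      by simp
  next
    case (Suc j')
    obtain p where p: "p \<in> F" "c p = alt_colour a b j" "ends p = {xs ! (j - 1), xs ! j}"
      using alternating_pathD[OF path, of j] Suc assms(6) by auto
    have "g = p"
      using proper_edge_coloring_unique[OF proper assms(4) p(1)] colour p assms(7) by auto
    then show thesis
      using that[of j] p colour Suc by auto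
  qed
qed

lemma alternating_path_interior_colours:
  assumes path: "alternating_path F c a b xs" and "0 < j" "Suc j < length xs"
  shows "colour_at F c a (xs ! j) \<and> colour_at F c b (xs ! j)"
proof -
  obtain p where "p \<in> F" "c p = alt_colour a b j" "ends p = {xs ! (j - 1), xs ! j}"
    using alternating_pathD[OF path, of j] assms by auto
  moreover obtain q where "q \<in> F" "c q = alt_colour a b (Suc j)" "ends q = {xs ! j, xs ! Suc j}"
    using alternating_pathD[OF path, of "Suc j"] assms by auto
  ultimately have "colour_at F c (alt_colour a b j) (xs ! j)"
    "colour_at F c (alt_colour a b (Suc j)) (xs ! j)"
    by (auto intro: colour_atI)
  then show ?thesis
    by (cases "odd j") (auto simp: alt_colour_def)
qed

lemma alternating_path_end:
  assumes path: "alternating_path F c a b xs" and "z \<in> set xs" "z \<noteq> hd xs"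
    and "\<not> (colour_at F c a z \<and> colour_at F c b z)"
  shows "z = last xs"
proof -
  obtain j where j: "j < length xs" "z = xs ! j"
    using assms(2) by (auto simp: in_set_conv_nth)
  have "xs \<noteq> []"
    using j by auto
  then have "j \<noteq> 0"
    using j assms(3) by (cases j) (auto simp: hd_conv_nth)
  then have "\<not> Suc j < length xs"
    using alternating_path_interior_colours[OF path, of j] j assms(4) \<open>j \<noteq> 0\<close> by auto
  then have "j = length xs - 1"
    using j by linarith
  then show ?thesis
    using j \<open>xs \<noteq> []\<close> by (simp add: last_conv_nth)
qed

lemma alternating_path_subset_V:
  assumes "F \<subseteq> E" and path: "alternating_path F c a b xs" and "xs ! 0 \<in> V"
  shows "set xs \<subseteq> V"
proof
  fix x assume "x \<in> set xs"
  then obtain i where i: "i < length xs" "x = xs ! i"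
    by (auto simp: in_set_conv_nth)
  show "x \<in> V"
  proof (cases i)
    case 0
    then show ?thesis
      using assms(3) i by simp
  next
    case (Suc i')
    then obtain p where "p \<in> F" "ends p = {xs ! (i - 1), xs ! i}"
      using alternating_pathD[OF path, of i] i by auto
    then show ?thesis
      using ends_subset assms(1) i by auto
  qed
qed

lemma alternating_path_subset_kempe_chain:
  assumes path: "alternating_path F c a b xs"
  shows "set xs \<subseteq> kempe_chain F c {a, b} (xs ! 0)"
proof -
  have "xs ! i \<in> kempe_chain F c {a, b} (xs ! 0)" if "i < length xs" for i
    using that
  proof (induction i)
    case 0
    then show ?case
      by (simp add: kempe_chain_refl)
  next
    case (Suc i)
    obtain p where "p \<in> F" "c p = alt_colour a b (Suc i)" "ends p = {xs ! i, xs ! Suc i}"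
      using alternating_pathD[OF path, of "Suc i"] Suc.prems by auto
    then have "(xs ! i, xs ! Suc i) \<in> kempe_adj F c {a, b}"
      by (intro kempe_adjI) (auto simp: alt_colour_def)
    then show ?case
      using Suc kempe_chain_closed by fastforce
  qed
  then show ?thesis
    by (auto simp: in_set_conv_nth)
qed

lemma alternating_path_snoc:
  assumes path: "alternating_path F c a b xs" and "xs \<noteq> []" "y \<notin> set xs"
    and "g \<in> F" "c g = alt_colour a b (length xs)" "ends g = {last xs, y}"
  shows "alternating_path F c a b (xs @ [y])"
  unfolding alternating_path_def
proof (intro conjI allI impI)
  show "distinct (xs @ [y])"
    using alternating_path_distinct[OF path] assms(3) by simp
next
  fix i assume i: "0 < i \<and> i < length (xs @ [y])"
  show "\<exists>f\<in>F. c f = alt_colour a b i \<and> ends f = {(xs @ [y]) ! (i - 1), (xs @ [y]) ! i}"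
  proof (cases "i < length xs")
    case True
    then show ?thesis
      using alternating_pathD[OF path, of i] i by (auto simp: nth_append)
  next
    case False
    then have "i = length xs"
      using i by simp
    then show ?thesis
      using assms(2,4-6) by (auto simp: nth_append last_conv_nth)
  qed
qed

lemma alternating_path_no_return:
  assumes proper: "proper_edge_coloring k F ends c" and "F \<subseteq> E"
    and path: "alternating_path F c a b xs" and "a \<noteq> b" "\<not> colour_at F c a (xs ! 0)" "xs \<noteq> []"
    and g: "g \<in> F" "c g = alt_colour a b (length xs)" "ends g = {last xs, y}"
  shows "y \<notin> set xs"
proof
  assume "y \<in> set xs"
  then obtain j where j: "j < length xs" "y = xs ! j"
    by (auto simp: in_set_conv_nth)
  define m where "m = length xs - 1"
  have m: "Suc m = length xs" "last xs = xs ! m"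
    using assms(6) by (auto simp: m_def last_conv_nth)
  have "y \<noteq> last xs"
    using card_ends[of g] g assms(2) by auto
  then have "Suc j < length xs"
    using j m by (cases "j = m") auto
  moreover have "c g \<in> {a, b}"
    using g(2) by (simp add: alt_colour_def)
  ultimately obtain i where i: "i = j \<or> i = Suc j" "0 < i" "c g = alt_colour a b i"
    "ends g = {xs ! (i - 1), xs ! i}"
    using alternating_path_edge_at[OF proper path assms(5) g(1)] g(3) j by blast
  have "xs ! m \<in> {xs ! (i - 1), xs ! i}"
    using i(4) g(3) m by auto
  moreover have "i \<le> m"
    using i \<open>Suc j < length xs\<close> m by auto
  ultimately have "m = i"
    using alternating_path_distinct[OF path] m i(2) by (auto simp: nth_eq_iff_index_eq)
  then have "length xs = Suc i"
    using m by simp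
  then show False
    using i(3) g(2) assms(4) by (simp add: alt_colour_def split: if_splits)
qed

lemma alternating_path_kempe_closed:
  assumes proper: "proper_edge_coloring k F ends c" and path: "alternating_path F c a b xs"
    and "\<not> colour_at F c a (xs ! 0)" "xs \<noteq> []"
    and stuck: "\<not> colour_at F c (alt_colour a b (length xs)) (last xs)"
  shows "kempe_adj F c {a, b} `` set xs \<subseteq> set xs"
proof clarify
  fix x y assume "x \<in> set xs" "(x, y) \<in> kempe_adj F c {a, b}"
  then obtain j g where j: "j < length xs" "x = xs ! j"
    and g: "g \<in> F" "c g \<in> {a, b}" "ends g = {x, y}"
    by (auto simp: in_set_conv_nth kempe_adj_def)
  show "y \<in> set xs"
  proof (cases "Suc j < length xs")
    case True
    then obtain i where "i \<le> Suc j" "ends g = {xs ! (i - 1), xs ! i}"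
      using alternating_path_edge_at[OF proper path assms(3) g(1,2)] g(3) j by (metis insertI1 le_refl le_SucI)
    then show ?thesis
      using g(3) True by (auto simp: doubleton_eq_iff)
  next
    case False
    then have "length xs = Suc j"
      using j by simp
    moreover have "xs \<noteq> []"
      using j by auto
    ultimately have last: "x = last xs" "Suc j = length xs"
      using j by (auto simp: last_conv_nth)
    then have "c g \<noteq> alt_colour a b (Suc j)"
      using stuck g by (auto intro: colour_atI)
    then have colour: "c g = alt_colour a b j"
      using g(2) by (auto simp: alt_colour_def)
    show ?thesis
    proof (cases j)
      case 0
      then show ?thesis
        using colour g j assms(3) by (auto simp: alt_colour_def intro: colour_atI)
    next
      case (Suc j')
      obtain p where p: "p \<in> F" "c p = alt_colour a b j" "ends p = {xs ! (j - 1), xs ! j}"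
        using alternating_pathD[OF path, of j] Suc j by auto
      have "g = p"
        using proper_edge_coloring_unique[OF proper g(1) p(1)] colour p g j by auto
      then show ?thesis
        using p g j by (auto simp: doubleton_eq_iff)
    qed
  qed
qed

lemma maximal_alternating_path_exists:
  assumes proper: "proper_edge_coloring k F ends c" and "F \<subseteq> E" "a \<noteq> b"
    and "\<not> colour_at F c a u" "colour_at F c b u"
  obtains xs where "alternating_path F c a b xs" "xs ! 0 = u" "2 \<le> length xs"
    "\<not> colour_at F c (alt_colour a b (length xs)) (last xs)"
proof -
  let ?P = "\<lambda>xs. alternating_path F c a b xs \<and> xs \<noteq> [] \<and> xs ! 0 = u"
  obtain f where f: "f \<in> F" "c f = b" "u \<in> ends f"
    using assms(5) unfolding colour_at_def by blast
  then obtain y where y: "y \<noteq> u" "ends f = {u, y}"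
    using obtain_other_end assms(2) by blast
  have "?P [u, y]"
    unfolding alternating_path_def using f y by (auto simp: alt_colour_def less_Suc_eq insert_commute)
  moreover have "length xs < Suc (card V)" if "?P xs" for xs
  proof -
    have "u \<in> V"
      using f ends_subset assms(2) by blast
    then have "set xs \<subseteq> V"
      using alternating_path_subset_V[OF assms(2), of c a b xs] that by auto
    then have "card (set xs) \<le> card V"
      using finite_V by (rule card_mono[rotated])
    then show ?thesis
      using that distinct_card alternating_path_distinct by fastforce
  qed
  ultimately obtain xs where xs: "?P xs" and longest: "\<And>ys. ?P ys \<Longrightarrow> length ys \<le> length xs"
    using Lattices_Big.ex_has_greatest_nat[of ?P "[u, y]" length] by blast
  have "\<not> colour_at F c (alt_colour a b (length xs)) (last xs)"
  proof
    assume "colour_at F c (alt_colour a b (length xs)) (last xs)"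
    then obtain g where g: "g \<in> F" "c g = alt_colour a b (length xs)" "last xs \<in> ends g"
      unfolding colour_at_def by blast
    then obtain z where z: "ends g = {last xs, z}"
      using obtain_other_end assms(2) by blast
    then have "z \<notin> set xs"
      using alternating_path_no_return[OF proper assms(2)] xs g assms(3,4) by blast
    then have "?P (xs @ [z])"
      using alternating_path_snoc xs g z by (auto simp: nth_append)
    then show False
      using longest by fastforce
  qed
  moreover have "2 \<le> length xs"
    using longest[of "[u, y]"] \<open>?P [u, y]\<close> by simp
  ultimately show thesis
    using that xs by blast
qed

lemma kempe_chain_alternating_path:
  assumes proper: "proper_edge_coloring k F ends c" and "F \<subseteq> E" "a \<noteq> b"
    and "\<not> colour_at F c a u" "colour_at F c b u"
  obtains xs where "alternating_path F c a b xs" "hd xs = u" "2 \<le> length xs"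
    "set xs = kempe_chain F c {a, b} u"
proof -
  obtain xs where xs: "alternating_path F c a b xs" "xs ! 0 = u" "2 \<le> length xs"
    and stuck: "\<not> colour_at F c (alt_colour a b (length xs)) (last xs)"
    by (rule maximal_alternating_path_exists[OF assms])
  then have "xs \<noteq> []"
    by auto
  then have "kempe_adj F c {a, b} `` set xs \<subseteq> set xs"
    using alternating_path_kempe_closed[OF proper xs(1) _ _ stuck] xs(2) assms(4) by blast
  moreover have "u \<in> set xs"
    using xs(2) nth_mem[of 0 xs] \<open>xs \<noteq> []\<close> by auto
  ultimately have "kempe_chain F c {a, b} u \<subseteq> set xs"
    using kempe_chain_subset by blast
  moreover have "set xs \<subseteq> kempe_chain F c {a, b} u"
    using alternating_path_subset_kempe_chain xs by blast
  ultimately show thesis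
    using that xs \<open>xs \<noteq> []\<close> by (auto simp: hd_conv_nth)
qed

lemma kempe_chain_missing_unique:
  assumes "proper_edge_coloring k F ends c" "F \<subseteq> E" "a \<noteq> b"
    and "\<not> colour_at F c a u" "colour_at F c b u"
    and "x \<in> kempe_chain F c {a, b} u" "x \<noteq> u" "\<not> (colour_at F c a x \<and> colour_at F c b x)"
    and "y \<in> kempe_chain F c {a, b} u" "y \<noteq> u" "\<not> (colour_at F c a y \<and> colour_at F c b y)"
  shows "x = y"
proof -
  obtain xs where xs: "alternating_path F c a b xs" "hd xs = u" "set xs = kempe_chain F c {a, b} u"
    by (rule kempe_chain_alternating_path[OF assms(1-5)])
  have "x = last xs"
    using alternating_path_end[OF xs(1)] xs(2,3) assms(6-8) by blast
  moreover have "y = last xs"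
    using alternating_path_end[OF xs(1)] xs(2,3) assms(9-11) by blast
  ultimately show ?thesis
    by simp
qed

lemma alternating_path_prefix_kempe_closed:
  assumes proper: "proper_edge_coloring k F ends c" and path: "alternating_path F c a b xs"
    and "\<not> colour_at F c a (xs ! 0)" "i < length xs"
    and p: "p \<in> F" "c p = alt_colour a b i" "ends p = {xs ! (i - 1), xs ! i}"
  shows "kempe_adj (F - {p}) c {a, b} `` set (take i xs) \<subseteq> set (take i xs)"
proof clarify
  fix z y assume "z \<in> set (take i xs)" "(z, y) \<in> kempe_adj (F - {p}) c {a, b}"
  then obtain g where g: "g \<in> F" "g \<noteq> p" "c g \<in> {a, b}" "ends g = {z, y}"
    unfolding kempe_adj_def by blast
  obtain j where j: "j < i" "z = xs ! j"
    using \<open>z \<in> set (take i xs)\<close> by (auto simp: in_set_conv_nth)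
  have "Suc j < length xs" "xs ! j \<in> ends g"
    using j g(4) assms(4) by auto
  then obtain l where l: "l = j \<or> l = Suc j" "0 < l" "c g = alt_colour a b l"
    "ends g = {xs ! (l - 1), xs ! l}"
    by (rule alternating_path_edge_at[OF proper path assms(3) g(1,3)])
  have "l \<noteq> i"
    using proper_edge_coloring_unique[OF proper g(1) p(1)] g(2) l p by auto
  then have "l < i"
    using l j by auto
  moreover have take_mem: "xs ! m \<in> set (take i xs)" if "m < i" for m
    using that assms(4) nth_mem[of m "take i xs"] by simp
  ultimately show "y \<in> set (take i xs)"
    using l(4) g(4) take_mem[of l] take_mem[of "l - 1"] by (auto simp: doubleton_eq_iff)
qed

end

locale cubic_multigraph = loopless_multigraph V E ends
  for V :: "'v set" and E :: "'e set" and ends :: "'e \<Rightarrow> 'v set" +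
  assumes degree_3: "v \<in> V \<Longrightarrow> degree E ends v = 3"
begin

lemma degree_add_card_uncovered_le:
  assumes "F \<subseteq> E" "U \<subseteq> E - F" "e \<in> U" "\<And>f. f \<in> U \<Longrightarrow> x \<in> ends f"
  shows "degree F ends x + card U \<le> 3"
proof -
  have "x \<in> V"
    using assms ends_subset by blast
  have "card U \<le> degree (E - F) ends x"
    unfolding degree_def using finite_E assms(2,4) by (intro card_mono) auto
  then show ?thesis
    using degree_diff[OF assms(1), of x] degree_3[OF \<open>x \<in> V\<close>] by simp
qed

lemma missing_third_colour:
  assumes max: "max_colouring 3 F c" and "e \<in> E - F" "y \<in> ends e"
    and "colour_at F c a y" "colour_at F c b y" "a \<noteq> b" "c0 \<noteq> a" "c0 \<noteq> b"
  shows "\<not> colour_at F c c0 y"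
proof
  assume "colour_at F c c0 y"
  then have "card {a, b, c0} \<le> degree F ends y"
    using card_le_degree_if_colours_at[OF max_colouringD(2,3)[OF max], of "{a, b, c0}" y] assms(4,5)
    by auto
  moreover have "degree F ends y + 1 \<le> 3"
    using degree_add_card_uncovered_le[OF max_colouringD(1)[OF max], of "{e}" e y] assms(2,3) by auto
  ultimately show False
    using assms(6-8) by auto
qed

lemma uncovered_edges_disjoint:
  assumes max: "max_colouring 3 F c" and e1: "e1 \<in> E - F" and e2: "e2 \<in> E - F" and "e1 \<noteq> e2"
  shows "ends e1 \<inter> ends e2 = {}"
proof (rule ccontr)
  assume "ends e1 \<inter> ends e2 \<noteq> {}"
  then obtain x where x: "x \<in> ends e1" "x \<in> ends e2"
    by blast
  obtain v where v: "v \<noteq> x" "ends e1 = {x, v}"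
    using obtain_other_end e1 x by blast
  obtain w where w: "w \<noteq> x" "ends e2 = {x, w}"
    using obtain_other_end e2 x by blast
  note FE = max_colouringD(1)[OF max] and proper = max_colouringD(2)[OF max]
    and fin = max_colouringD(3)[OF max]
  obtain a b where ab: "a < 3" "b < 3" "a \<noteq> b" "\<not> colour_at F c a x" "\<not> colour_at F c b x"
    using two_missing_colours[OF proper fin, of x]
      degree_add_card_uncovered_le[OF FE, of "{e1, e2}" e1 x] e1 e2 x \<open>e1 \<noteq> e2\<close> by auto
  have "\<exists>c0::nat. c0 < 3 \<and> c0 \<noteq> a \<and> c0 \<noteq> b"
    by presburger
  then obtain c0 :: nat where c0: "c0 < 3" "c0 \<noteq> a" "c0 \<noteq> b"
    by blast
  have coloured: "colour_at F c a y \<and> colour_at F c b y" if "y \<in> {v, w}" for y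
    using max_colouring_colour_at_end[OF max e1, of a] max_colouring_colour_at_end[OF max e1, of b]
      max_colouring_colour_at_end[OF max e2, of a] max_colouring_colour_at_end[OF max e2, of b]
      that ab v w by auto
  have "v \<noteq> w"
  proof
    assume "v = w"
    then have "degree F ends v + 2 \<le> 3"
      using degree_add_card_uncovered_le[OF FE, of "{e1, e2}" e1 v] e1 e2 v w \<open>e1 \<noteq> e2\<close> by auto
    moreover have "card {a, b} \<le> degree F ends v"
      using card_le_degree_if_colours_at[OF proper fin, of "{a, b}" v] coloured by auto
    ultimately show False
      using ab(3) by simp
  qed
  have missing_c0: "\<not> colour_at F c c0 y" if "e \<in> E - F" "y \<in> ends e" "y \<in> {v, w}" for e y
    using missing_third_colour[OF max that(1,2)] coloured[OF that(3)] ab(3) c0 by blast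
  \<comment> \<open>The \<open>{c0, a}\<close>-chain of \<open>v\<close> is a path that has to end both at \<open>x\<close> and at \<open>w\<close>.\<close>
  have "x \<in> kempe_chain F c {c0, a} v"
    using max_colouring_kempe_chain[OF max e1, of v x c0 a] v c0 ab missing_c0[OF e1]
    by (auto simp: insert_commute)
  moreover have "x \<in> kempe_chain F c {c0, a} w"
    using max_colouring_kempe_chain[OF max e2, of w x c0 a] w c0 ab missing_c0[OF e2]
    by (auto simp: insert_commute)
  ultimately have "w \<in> kempe_chain F c {c0, a} v"
    using kempe_chain_trans kempe_chain_sym by blast
  then have "x = w"
    using kempe_chain_missing_unique[OF proper FE, of c0 a v x w] \<open>x \<in> kempe_chain F c {c0, a} v\<close>
      c0 ab coloured missing_c0[OF e1] missing_c0[OF e2] v w \<open>v \<noteq> w\<close> by auto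
  then show False
    using w(1) by simp
qed

lemma unique_missing_colour:
  assumes max: "max_colouring 3 F c" and e: "e \<in> E - F" and x: "x \<in> ends e"
  obtains k where "k < 3" "\<not> colour_at F c k x" "\<And>j. j < 3 \<Longrightarrow> j \<noteq> k \<Longrightarrow> colour_at F c j x"
proof -
  note FE = max_colouringD(1)[OF max] and proper = max_colouringD(2)[OF max]
    and fin = max_colouringD(3)[OF max]
  have "x \<in> V"
    using e x ends_subset by blast
  have "{f\<in>E - F. x \<in> ends f} = {e}"
    using uncovered_edges_disjoint[OF max] e x by blast
  then have degree: "degree F ends x = 2"
    using degree_diff[OF FE, of x] degree_3[OF \<open>x \<in> V\<close>] by (simp add: degree_def)
  obtain k where k: "k \<in> {0, 1, 2}" "\<not> colour_at F c k x"
    using missing_colour_exists[OF proper fin, of x "{0, 1, 2}"] degree by auto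
  have others: "colour_at F c j x" if "j < 3" "j \<noteq> k" for j
  proof (rule ccontr)
    assume "\<not> colour_at F c j x"
    then have "{i. colour_at F c i x} \<subseteq> {0, 1, 2} - {j, k}"
      using colour_at_less[OF proper] k by fastforce
    then have "card {i. colour_at F c i x} \<le> card ({0, 1, 2::nat} - {j, k})"
      by (intro card_mono) auto
    also have "\<dots> = 1"
      using that k(1) by (subst card_Diff_subset) auto
    finally show False
      using card_colours_at[OF proper fin] degree by simp
  qed
  have "k < 3"
    using k(1) by auto
  then show thesis
    using that k(2) others by blast
qed

definition missing_colours :: "'e set \<Rightarrow> ('e \<Rightarrow> nat) \<Rightarrow> 'e \<Rightarrow> nat set" where
  "missing_colours F c e = {k. k < 3 \<and> (\<exists>x\<in>ends e. \<not> colour_at F c k x)}"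

text \<open>By \<open>kempe_path_interior\<close> this is the set of inner vertices of the Kempe path of \<open>e\<close>; the
  definition avoids choosing that path.\<close>

definition interior :: "'e set \<Rightarrow> ('e \<Rightarrow> nat) \<Rightarrow> 'e \<Rightarrow> 'v set" where
  "interior F c e = (\<Union>x\<in>ends e. kempe_chain F c (missing_colours F c e) x) - ends e"

definition saturated :: "'e set \<Rightarrow> 'v set" where
  "saturated F = V - \<Union> (ends ` (E - F))"

definition kempe_path :: "'e set \<Rightarrow> ('e \<Rightarrow> nat) \<Rightarrow> 'e \<Rightarrow> nat \<Rightarrow> nat \<Rightarrow> 'v list \<Rightarrow> bool" where
  "kempe_path F c e a b xs \<longleftrightarrow> a < 3 \<and> b < 3 \<and> a \<noteq> b \<and>
     alternating_path F c a b xs \<and> 2 \<le> length xs \<and> ends e = {hd xs, last xs} \<and>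
     \<not> colour_at F c a (hd xs) \<and> \<not> colour_at F c b (last xs) \<and>
     set xs = kempe_chain F c {a, b} (hd xs)"

lemma kempe_path_ne: "kempe_path F c e a b xs \<Longrightarrow> xs \<noteq> []"
  by (auto simp: kempe_path_def)

lemma kempe_path_exists:
  assumes max: "max_colouring 3 F c" and e: "e \<in> E - F"
  obtains a b xs where "kempe_path F c e a b xs"
proof -
  have "card (ends e) = 2"
    using card_ends e by simp
  then obtain u v where uv: "ends e = {u, v}" "u \<noteq> v"
    by (auto simp: card_2_iff)
  obtain a where a: "a < 3" "\<not> colour_at F c a u" "\<And>j. j < 3 \<Longrightarrow> j \<noteq> a \<Longrightarrow> colour_at F c j u"
    using unique_missing_colour[OF max e] uv by blast
  obtain b where b: "b < 3" "\<not> colour_at F c b v" "\<And>j. j < 3 \<Longrightarrow> j \<noteq> b \<Longrightarrow> colour_at F c j v"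
    using unique_missing_colour[OF max e] uv by blast
  have "a \<noteq> b"
    using max_colouring_colour_at_end[OF max e a(1)] a b uv by auto
  then obtain xs where xs: "alternating_path F c a b xs" "hd xs = u" "2 \<le> length xs"
    "set xs = kempe_chain F c {a, b} u"
    using kempe_chain_alternating_path[OF max_colouringD(2,1)[OF max]] a b by blast
  have "v \<in> set xs"
    using max_colouring_kempe_chain[OF max e uv(1) a(1) b(1) a(2) b(2)] xs(4) by simp
  then have "v = last xs"
    using alternating_path_end[OF xs(1)] xs(2) uv(2) b(2) by blast
  then have "kempe_path F c e a b xs"
    unfolding kempe_path_def using a b \<open>a \<noteq> b\<close> xs uv by simp
  then show thesis
    by (rule that)
qed

lemma kempe_path_odd_length:
  assumes "kempe_path F c e a b xs"
  shows "odd (length xs)"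
proof
  assume "even (length xs)"
  moreover have path: "alternating_path F c a b xs" "2 \<le> length xs"
    using assms by (auto simp: kempe_path_def)
  moreover have "xs \<noteq> []"
    using path(2) by auto
  ultimately have n: "0 < length xs - 1" "length xs - 1 < length xs" "odd (length xs - 1)"
    "last xs = xs ! (length xs - 1)"
    by (auto simp: last_conv_nth)
  obtain p where "p \<in> F" "c p = alt_colour a b (length xs - 1)"
    "ends p = {xs ! (length xs - 1 - 1), xs ! (length xs - 1)}"
    by (rule alternating_pathD[OF path(1) n(1,2)])
  then have "colour_at F c b (last xs)"
    using n by (auto simp: alt_colour_def intro: colour_atI)
  then show False
    using assms by (simp add: kempe_path_def)
qed

lemma kempe_path_missing_colours:
  assumes max: "max_colouring 3 F c" and e: "e \<in> E - F" and path: "kempe_path F c e a b xs"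
  shows "missing_colours F c e = {a, b}"
proof -
  have ends: "ends e = {hd xs, last xs}" and ab: "a < 3" "b < 3"
    and missing: "\<not> colour_at F c a (hd xs)" "\<not> colour_at F c b (last xs)"
    using path by (auto simp: kempe_path_def)
  have "\<not> colour_at F c k (hd xs) \<longleftrightarrow> k = a" if "k < 3" for k
    using unique_missing_colour[OF max e, of "hd xs"] ends that ab missing by (metis insertI1)
  moreover have "\<not> colour_at F c k (last xs) \<longleftrightarrow> k = b" if "k < 3" for k
    using unique_missing_colour[OF max e, of "last xs"] ends that ab missing by (metis insertCI)
  ultimately show ?thesis
    unfolding missing_colours_def using ends ab by auto
qed

lemma kempe_path_interior:
  assumes max: "max_colouring 3 F c" and e: "e \<in> E - F" and path: "kempe_path F c e a b xs"
  shows "interior F c e = set xs - ends e"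
proof -
  have ends: "ends e = {hd xs, last xs}" and xs: "set xs = kempe_chain F c {a, b} (hd xs)"
    and "xs \<noteq> []"
    using path by (auto simp: kempe_path_def)
  then have "last xs \<in> kempe_chain F c {a, b} (hd xs)"
    by auto
  then have "kempe_chain F c {a, b} (last xs) = kempe_chain F c {a, b} (hd xs)"
    using kempe_chain_trans kempe_chain_sym by blast
  then show ?thesis
    unfolding interior_def kempe_path_missing_colours[OF assms] using ends xs by auto
qed

lemma kempe_path_card_interior:
  assumes max: "max_colouring 3 F c" and e: "e \<in> E - F" and path: "kempe_path F c e a b xs"
  shows "card (interior F c e) = length xs - 2"
proof -
  have "xs \<noteq> []" "distinct xs"
    using path by (auto simp: kempe_path_def alternating_path_def)
  moreover have "ends e \<subseteq> set xs"
    using path \<open>xs \<noteq> []\<close> by (auto simp: kempe_path_def)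
  moreover have "finite (ends e)" "card (ends e) = 2"
    using finite_ends card_ends e by auto
  ultimately show ?thesis
    using kempe_path_interior[OF assms] by (simp add: card_Diff_subset distinct_card)
qed

lemma card_interior_pos:
  assumes max: "max_colouring 3 F c" and e: "e \<in> E - F"
  shows "0 < card (interior F c e)"
proof -
  obtain a b xs where path: "kempe_path F c e a b xs"
    using kempe_path_exists[OF max e] .
  then have "3 \<le> length xs"
    using kempe_path_odd_length[OF path] by (auto simp: kempe_path_def elim: oddE)
  then show ?thesis
    using kempe_path_card_interior[OF max e path] by simp
qed

lemma card_missing_colours:
  assumes max: "max_colouring 3 F c" and e: "e \<in> E - F"
  shows "missing_colours F c e \<subseteq> {..<3} \<and> card (missing_colours F c e) = 2"
proof -
  obtain a b xs where path: "kempe_path F c e a b xs"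
    using kempe_path_exists[OF max e] .
  then show ?thesis
    using kempe_path_missing_colours[OF max e path] by (auto simp: kempe_path_def)
qed

text \<open>Swapping \<open>a\<close> and \<open>b\<close> on the part of the path before its \<open>i\<close>-th edge \<open>p\<close> makes \<open>b\<close> missing
  at both ends of \<open>e\<close>, so \<open>e\<close> can replace \<open>p\<close> in a maximum colouring.\<close>

lemma kempe_path_shift:
  assumes max: "max_colouring 3 F c" and e: "e \<in> E - F" and path: "kempe_path F c e a b xs"
    and i: "0 < i" "i < length xs"
    and p: "p \<in> F" "c p = alt_colour a b i" "ends p = {xs ! (i - 1), xs ! i}"
  shows "max_colouring 3 (insert e (F - {p})) ((kempe_swap a b (set (take i xs)) c)(e := b))"
proof -
  note FE = max_colouringD(1)[OF max] and proper = max_colouringD(2)[OF max]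
    and fin = max_colouringD(3)[OF max]
  have ab: "a < 3" "b < 3" and ap: "alternating_path F c a b xs"
    and ends: "ends e = {xs ! 0, last xs}" and last: "last xs = xs ! (length xs - 1)"
    and missing: "\<not> colour_at F c a (xs ! 0)" "\<not> colour_at F c b (last xs)"
    using path kempe_path_ne[OF path] by (auto simp: kempe_path_def hd_conv_nth last_conv_nth)
  define S where "S = set (take i xs)"
  let ?c = "kempe_swap a b S c"
  have closed: "kempe_adj (F - {p}) c {a, b} `` S \<subseteq> S"
    unfolding S_def using alternating_path_prefix_kempe_closed[OF proper ap missing(1) i(2) p] .
  have swapped: "proper_edge_coloring 3 (F - {p}) ends ?c"
    using proper_kempe_swap[OF proper_edge_coloring_subset[OF proper] _ ab closed] FE by blast
  have "xs ! 0 \<in> S"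
    using i unfolding S_def by (auto simp: in_set_conv_nth)
  moreover have "kempe_adj (F - {p}) c {b, a} `` S \<subseteq> S"
    using closed by (simp add: insert_commute)
  ultimately have "colour_at (F - {p}) (kempe_swap b a S c) b (xs ! 0) = colour_at (F - {p}) c a (xs ! 0)"
    using FE by (intro colour_at_kempe_swap_inside) auto
  then have "\<not> colour_at (F - {p}) ?c b (xs ! 0)"
    using missing(1) kempe_swap_commute[of a b] by (auto dest: colour_at_mono)
  moreover have "last xs \<notin> S"
    using last alternating_path_distinct[OF ap] i unfolding S_def
    by (auto simp: in_set_conv_nth nth_eq_iff_index_eq)
  then have "\<not> colour_at (F - {p}) ?c b (last xs)"
    using colour_at_kempe_swap_outside missing(2) by (auto dest: colour_at_mono)
  ultimately have "proper_edge_coloring 3 (insert e (F - {p})) ends (?c(e := b))"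
    using ends by (intro proper_edge_coloring_insert[OF swapped ab(2)]) auto
  moreover have "card (insert e (F - {p})) = card F"
    using e p fin card_Suc_Diff1[OF fin p(1)] by simp
  ultimately show ?thesis
    unfolding S_def using max_colouring_same_card[OF max, of "insert e (F - {p})"] FE e by blast
qed

lemma kempe_path_interior_not_uncovered:
  assumes max: "max_colouring 3 F c" and e: "e \<in> E - F" and path: "kempe_path F c e a b xs"
    and i: "0 < i" "Suc i < length xs" and t: "t \<in> E - F"
  shows "xs ! i \<notin> ends t"
proof
  assume "xs ! i \<in> ends t"
  have ap: "alternating_path F c a b xs" and ends: "ends e = {xs ! 0, xs ! (length xs - 1)}"
    using path kempe_path_ne[OF path] by (auto simp: kempe_path_def hd_conv_nth last_conv_nth)
  obtain p where p: "p \<in> F" "c p = alt_colour a b i" "ends p = {xs ! (i - 1), xs ! i}"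
    using alternating_pathD[OF ap, of i] i by auto
  have "i < length xs" "0 < length xs" "length xs - 1 < length xs"
    using i by auto
  then have "xs ! i \<notin> ends e"
    using alternating_path_distinct[OF ap] i ends by (auto simp: nth_eq_iff_index_eq)
  then have "t \<noteq> e"
    using \<open>xs ! i \<in> ends t\<close> by auto
  then have "ends p \<inter> ends t = {}"
    using uncovered_edges_disjoint[OF kempe_path_shift[OF max e path i(1) _ p], of t] p t e
      max_colouringD(1)[OF max] i by auto
  then show False
    using p(3) \<open>xs ! i \<in> ends t\<close> by auto
qed

lemma interior_subset_saturated:
  assumes max: "max_colouring 3 F c" and e: "e \<in> E - F"
  shows "interior F c e \<subseteq> saturated F"
proof
  fix y assume y: "y \<in> interior F c e"
  obtain a b xs where path: "kempe_path F c e a b xs"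
    using kempe_path_exists[OF max e] .
  have ap: "alternating_path F c a b xs" and ends: "ends e = {xs ! 0, xs ! (length xs - 1)}"
    using path kempe_path_ne[OF path] by (auto simp: kempe_path_def hd_conv_nth last_conv_nth)
  have "y \<in> set xs - ends e"
    using y kempe_path_interior[OF max e path] by simp
  then obtain j where "j < length xs" "y = xs ! j" "j \<noteq> 0" "j \<noteq> length xs - 1"
    using ends by (auto simp: in_set_conv_nth)
  then have j: "0 < j" "Suc j < length xs" "y = xs ! j"
    by auto
  have "set xs \<subseteq> V"
    using alternating_path_subset_V[OF max_colouringD(1)[OF max] ap] ends ends_subset e by auto
  then have "y \<in> V"
    using j nth_mem[of j xs] by auto
  moreover have "y \<notin> ends t" if "t \<in> E - F" for t
    using kempe_path_interior_not_uncovered[OF max e path j(1,2) that] j(3) by simp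
  ultimately show "y \<in> saturated F"
    unfolding saturated_def by blast
qed

lemma interiors_disjoint:
  assumes max: "max_colouring 3 F c" and e: "e \<in> E - F" and f: "f \<in> E - F" and "e \<noteq> f"
    and same: "missing_colours F c e = missing_colours F c f"
  shows "interior F c e \<inter> interior F c f = {}"
proof (rule ccontr)
  assume "interior F c e \<inter> interior F c f \<noteq> {}"
  then obtain x where x: "x \<in> interior F c e" "x \<in> interior F c f"
    by blast
  obtain a b xs where path: "kempe_path F c e a b xs"
    using kempe_path_exists[OF max e] .
  have ap: "alternating_path F c a b xs" and ends: "ends e = {hd xs, last xs}"
    and chain: "set xs = kempe_chain F c {a, b} (hd xs)"
    using path by (auto simp: kempe_path_def)
  have ab: "missing_colours F c f = {a, b}"
    using kempe_path_missing_colours[OF max e path] same by simp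
  obtain y where y: "y \<in> ends f" "x \<in> kempe_chain F c {a, b} y"
    using x(2) unfolding interior_def ab by blast
  have "x \<in> kempe_chain F c {a, b} (hd xs)"
    using x(1) kempe_path_interior[OF max e path] chain by auto
  then have "y \<in> set xs"
    using chain y(2) kempe_chain_trans kempe_chain_sym by blast
  obtain k where "k < 3" "\<not> colour_at F c k y"
    using unique_missing_colour[OF max f y(1)] .
  then have "k \<in> {a, b}"
    using ab y(1) unfolding missing_colours_def by blast
  then have "\<not> (colour_at F c a y \<and> colour_at F c b y)"
    using \<open>\<not> colour_at F c k y\<close> by auto
  then have "y \<in> ends e"
    using alternating_path_end[OF ap \<open>y \<in> set xs\<close>] ends by blast
  then show False
    using uncovered_edges_disjoint[OF max e f \<open>e \<noteq> f\<close>] y(1) by blast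
qed

lemma small_interior_exclusive:
  assumes max: "max_colouring 3 F c" and e: "e \<in> E - F" and f: "f \<in> E - F" and "e \<noteq> f"
    and small: "card (interior F c e) \<le> 2"
  shows "interior F c e \<inter> interior F c f = {}"
proof (rule ccontr)
  assume "interior F c e \<inter> interior F c f \<noteq> {}"
  then obtain x where x: "x \<in> interior F c e" "x \<in> interior F c f"
    by blast
  obtain a b xs where path: "kempe_path F c e a b xs"
    using kempe_path_exists[OF max e] .
  have ap: "alternating_path F c a b xs" and ends: "ends e = {xs ! 0, xs ! (length xs - 1)}"
    using path kempe_path_ne[OF path] by (auto simp: kempe_path_def hd_conv_nth last_conv_nth)
  have "length xs = 3"
    using small kempe_path_card_interior[OF max e path] kempe_path_odd_length[OF path] path
    by (auto simp: kempe_path_def elim!: oddE)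
  then have x1: "x = xs ! 1"
    using x(1) kempe_path_interior[OF max e path] ends
    by (auto simp: in_set_conv_nth numeral_3_eq_3 less_Suc_eq)
  obtain a' b' where "missing_colours F c f = {a', b'}" "a' < 3" "b' < 3" "a' \<noteq> b'"
    using card_missing_colours[OF max f] by (auto simp: card_2_iff)
  then have "a \<in> missing_colours F c f \<or> b \<in> missing_colours F c f"
    using two_subsets_of_three_meet[of a b a' b'] path by (auto simp: kempe_path_def)
  moreover obtain p1 where "p1 \<in> F" "c p1 = b" "ends p1 = {xs ! 0, xs ! 1}"
    using alternating_pathD[OF ap, of 1] \<open>length xs = 3\<close> by (auto simp: alt_colour_def)
  moreover obtain p2 where "p2 \<in> F" "c p2 = a" "ends p2 = {xs ! 1, xs ! 2}"
    using alternating_pathD[OF ap, of 2] \<open>length xs = 3\<close> by (auto simp: alt_colour_def)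
  ultimately obtain z where z: "z \<in> ends e" "(x, z) \<in> kempe_adj F c (missing_colours F c f)"
    using x1 ends \<open>length xs = 3\<close> by (auto intro: kempe_adjI simp: insert_commute)
  obtain y where y: "y \<in> ends f" "x \<in> kempe_chain F c (missing_colours F c f) y"
    using x(2) unfolding interior_def by blast
  have "z \<in> kempe_chain F c (missing_colours F c f) y"
    using kempe_chain_closed y(2) z(2) by blast
  moreover have "z \<notin> ends f"
    using uncovered_edges_disjoint[OF max e f \<open>e \<noteq> f\<close>] z(1) by blast
  ultimately have "z \<in> saturated F"
    using interior_subset_saturated[OF max f] y(1) unfolding interior_def by blast
  then show False
    using z(1) e unfolding saturated_def by blast
qed

lemma card_interiors_containing_le_3:
  assumes max: "max_colouring 3 F c"
  shows "card {e\<in>E - F. x \<in> interior F c e} \<le> 3"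
proof -
  let ?T = "{e\<in>E - F. x \<in> interior F c e}"
  have "inj_on (missing_colours F c) ?T"
    using interiors_disjoint[OF max] by (fastforce intro: inj_onI)
  then have "card ?T = card (missing_colours F c ` ?T)"
    by (simp add: card_image)
  also have "\<dots> \<le> card {A. A \<subseteq> {..<3::nat} \<and> card A = 2}"
  proof (rule card_mono)
    show "finite {A. A \<subseteq> {..<3::nat} \<and> card A = 2}"
      by (rule finite_subset[of _ "Pow {..<3}"]) auto
    show "missing_colours F c ` ?T \<subseteq> {A. A \<subseteq> {..<3} \<and> card A = 2}"
      using card_missing_colours[OF max] by auto
  qed
  also have "\<dots> = 3"
    by (simp add: n_subsets choose_two)
  finally show ?thesis .
qed

lemma interior_charge:
  assumes max: "max_colouring 3 F c" and e: "e \<in> E - F"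
  shows "1 \<le> (\<Sum>x\<in>interior F c e. 1 / real (card {f\<in>E - F. x \<in> interior F c f}))"
proof (cases "card (interior F c e) \<le> 2")
  case True
  have "{f\<in>E - F. x \<in> interior F c f} = {e}" if "x \<in> interior F c e" for x
    using small_interior_exclusive[OF max e _ _ True] that e by blast
  then have "(\<Sum>x\<in>interior F c e. 1 / real (card {f\<in>E - F. x \<in> interior F c f}))
      = real (card (interior F c e))"
    by simp
  then show ?thesis
    using card_interior_pos[OF max e] by simp
next
  case False
  have "1 / 3 \<le> 1 / real (card {f\<in>E - F. x \<in> interior F c f})" if "x \<in> interior F c e" for x
  proof -
    have "0 < card {f\<in>E - F. x \<in> interior F c f}"
      using that e finite_E by (auto simp: card_gt_0_iff)
    then show ?thesis
      using card_interiors_containing_le_3[OF max, of x] by (simp add: frac_le)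
  qed
  then have "real (card (interior F c e)) * (1 / 3)
      \<le> (\<Sum>x\<in>interior F c e. 1 / real (card {f\<in>E - F. x \<in> interior F c f}))"
    by (rule sum_bounded_below)
  then show ?thesis
    using False by simp
qed

lemma card_uncovered_le_saturated:
  assumes max: "max_colouring 3 F c"
  shows "card (E - F) \<le> card (saturated F)"
proof -
  have "real (card (E - F)) = (\<Sum>e\<in>E - F. 1)"
    by simp
  also have "\<dots> \<le> (\<Sum>e\<in>E - F. \<Sum>x\<in>interior F c e. 1 / real (card {f\<in>E - F. x \<in> interior F c f}))"
    using interior_charge[OF max] by (rule sum_mono)
  also have "\<dots> \<le> real (card (saturated F))"
    using finite_E finite_V interior_subset_saturated[OF max]
    by (intro sum_inverse_multiplicity_le) (auto simp: saturated_def)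
  finally show ?thesis
    by simp
qed

lemma card_V_eq:
  assumes max: "max_colouring 3 F c"
  shows "card V = 2 * card (E - F) + card (saturated F)"
proof -
  have "card (\<Union> (ends ` (E - F))) = (\<Sum>e\<in>E - F. card (ends e))"
    using finite_E finite_ends uncovered_edges_disjoint[OF max] by (intro card_UN_disjoint) auto
  also have "\<dots> = 2 * card (E - F)"
    using card_ends by simp
  moreover have "\<Union> (ends ` (E - F)) \<subseteq> V"
    using ends_subset by auto
  ultimately show ?thesis
    unfolding saturated_def using finite_V
    by (metis add.commute card_Diff_subset card_mono finite_subset le_add_diff_inverse)
qed

lemma max_colouring_card_ge:
  assumes max: "max_colouring 3 F c"
  shows "7 / 6 * real (card V) \<le> real (card F)"
proof -
  have "3 * card V = 2 * card E"
    using handshake degree_3 by simp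
  moreover have "card E = card F + card (E - F)"
    using max_colouringD(1)[OF max] finite_E by (metis card_Diff_subset card_mono finite_subset
        le_add_diff_inverse)
  ultimately have "7 * card V \<le> 6 * card F"
    using card_V_eq[OF max] card_uncovered_le_saturated[OF max] by linarith
  then show ?thesis
    by linarith
qed

end

theorem theorem3:
  fixes V :: "'v set" and E :: "'e set" and ends :: "'e \<Rightarrow> 'v set"
  assumes "cubic V E ends"
  shows "real (nu 3 E ends) \<ge> 7 / 6 * real (card V)"
proof -
  interpret cubic_multigraph V E ends
    using assms by unfold_locales (auto simp: cubic_def)
  obtain F c where "max_colouring 3 F c" "nu 3 E ends = card F"
    by (rule max_colouring_exists)
  then show ?thesis
    using max_colouring_card_ge by simp
qed

end
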